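(* Let $T$ be a rooted binary phylogenetic tree with root $\rho$ of out-degree 2 and children $\rho_1,\rho_2$, and let $\dot T_1,\dot T_2$ be as defined in the context. Under the $N_2$ model, $$RA_{\rm MP}(T)\ \ge\ \tfrac12\big(RA_{\rm MP}(\dot T_1)+RA_{\rm MP}(\dot T_2)\big).$$
   Context: A rooted binary phylogenetic tree is a finite tree with a distinguished root vertex, all edges directed away from it, in which the root has out-degree 2 or 1 (the edge at a root of out-degree 1 is the stem edge), and every other vertex has in-degree 1 and out-degree 0 or 2; out-degree-0 vertices are leaves. Under the Neyman 2-state model $N_2$, each edge $e$ carries a substitution probability $p_e\in[0,\frac12]$; given the root state, states propagate independently along edges, each edge changing state with probability $p_e$; $f$ is the restriction of the states to the leaves. Fitch sets: each leaf $x$ gets $\{f(x)\}$; a vertex with children $v_1,v_2$ gets $\mathrm{FS}(v_1)\cap\mathrm{FS}(v_2)$ if nonempty, else the union; a vertex with one child gets its child's set. $\mathrm{MP}$ chooses a uniformly random element of the root's Fitch set, and $RA_{\rm MP}$ of a tree is the probability that this choice equals the true root state. For $i=1,2$, $T_i$ is the maximal subtree of $T$ rooted at $\rho_i$, and $\dot T_i$ is $T_i$ together with the edge $(\rho,\rho_i)$ (with its substitution probability from $T$) as stem edge, rooted at $\rho$. *)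

theory Defs
  imports "HOL-Probability.Probability_Mass_Function"
begin

(* Subtrees whose root is not the overall root: a vertex is a leaf or has two
   children; each child edge carries its substitution probability. *)
datatype btree = Leaf | Node real btree real btree

(* Rooted binary phylogenetic trees: root of out-degree 2, or root of
   out-degree 1 with a stem edge (with its substitution probability). *)
datatype ptree = Root2 real btree real btree | Root1 real btree

fun valid_bt :: "btree \<Rightarrow> bool" where
  "valid_bt Leaf = True"
| "valid_bt (Node p1 a p2 b) \<longleftrightarrow>
     0 \<le> p1 \<and> p1 \<le> 1/2 \<and> 0 \<le> p2 \<and> p2 \<le> 1/2 \<and> valid_bt a \<and> valid_bt b"

fun valid_pt :: "ptree \<Rightarrow> bool" where
  "valid_pt (Root2 p1 a p2 b) = valid_bt (Node p1 a p2 b)"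
| "valid_pt (Root1 p a) \<longleftrightarrow> 0 \<le> p \<and> p \<le> 1/2 \<and> valid_bt a"

fun nleaves :: "btree \<Rightarrow> nat" where
  "nleaves Leaf = 1"
| "nleaves (Node _ a _ b) = nleaves a + nleaves b"

definition edge_step :: "bool \<Rightarrow> real \<Rightarrow> bool pmf" where
  "edge_step s p = map_pmf (\<lambda>c. if c then \<not> s else s) (bernoulli_pmf p)"

fun leaf_states :: "btree \<Rightarrow> bool \<Rightarrow> bool list pmf" where
  "leaf_states Leaf s = return_pmf [s]"
| "leaf_states (Node p1 a p2 b) s =
     bind_pmf (edge_step s p1) (\<lambda>s1. bind_pmf (edge_step s p2) (\<lambda>s2.
     bind_pmf (leaf_states a s1) (\<lambda>xs. map_pmf (\<lambda>ys. xs @ ys) (leaf_states b s2))))"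

definition fitch_combine :: "bool set \<Rightarrow> bool set \<Rightarrow> bool set" where
  "fitch_combine A B = (if A \<inter> B \<noteq> {} then A \<inter> B else A \<union> B)"

fun fitch :: "btree \<Rightarrow> bool list \<Rightarrow> bool set" where
  "fitch Leaf xs = {hd xs}"
| "fitch (Node _ a _ b) xs =
     fitch_combine (fitch a (take (nleaves a) xs)) (fitch b (drop (nleaves a) xs))"

fun pt_leaf_states :: "ptree \<Rightarrow> bool \<Rightarrow> bool list pmf" where
  "pt_leaf_states (Root2 p1 a p2 b) s = leaf_states (Node p1 a p2 b) s"
| "pt_leaf_states (Root1 p a) s = bind_pmf (edge_step s p) (leaf_states a)"

fun root_fitch :: "ptree \<Rightarrow> bool list \<Rightarrow> bool set" where
  "root_fitch (Root2 p1 a p2 b) xs = fitch (Node p1 a p2 b) xs"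
| "root_fitch (Root1 p a) xs = fitch a xs"

(* probability that MP (uniform choice from the root Fitch set) recovers the
   root state; root state uniform on {0,1} *)
definition RA_MP :: "ptree \<Rightarrow> real" where
  "RA_MP t = (\<Sum>s\<in>(UNIV::bool set). (1/2) *
     measure_pmf.expectation (pt_leaf_states t s)
       (\<lambda>xs. if s \<in> root_fitch t xs then 1 / real (card (root_fitch t xs)) else 0))"

end

theory Submission imports Defs begin

text \<open>
  Fix the root state \<open>s\<close>. The Fitch set at the top of a stem edge is a nonempty subset of
  \<open>{s, \<not> s}\<close>, and it is at least as likely to be \<open>{s}\<close> as \<open>{\<not> s}\<close>: this holds at a leaf
  and survives both an edge with substitution probability at most \<open>1/2\<close> and Fitch's
  combination step. Given two independent such sets with probabilities \<open>a, b, c\<close> of being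
  \<open>{s}, {\<not> s}, {s, \<not> s}\<close>, the chance that MP recovers \<open>s\<close> from their combination exceeds
  the average of the two individual chances by \<open>((a\<^sub>1 - b\<^sub>1) c\<^sub>2 + c\<^sub>1 (a\<^sub>2 - b\<^sub>2)) / 4 \<ge> 0\<close>:
  the only losing pairs, \<open>{\<not> s}\<close> against \<open>{s, \<not> s}\<close>, are outweighed by the pairs
  \<open>{s}\<close> against \<open>{s, \<not> s}\<close>.
\<close>

lemma expectation_pmf_finite:
  fixes M :: "'a::finite pmf" and f :: "'a \<Rightarrow> real"
  shows "measure_pmf.expectation M f = (\<Sum>x\<in>UNIV. f x * pmf M x)"
  by (rule integral_measure_pmf_real) auto

lemma expectation_bind_pmf_finite:
  fixes M :: "'a::finite pmf" and N :: "'a \<Rightarrow> 'b::finite pmf" and f :: "'b \<Rightarrow> real"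
  shows "measure_pmf.expectation (bind_pmf M N) f =
    measure_pmf.expectation M (\<lambda>x. measure_pmf.expectation (N x) f)"
  by (subst pmf_expectation_bind[of UNIV]) (auto simp: expectation_pmf_finite mult.commute)

lemma expectation_edge_step:
  assumes "0 \<le> p" "p \<le> 1"
  shows "measure_pmf.expectation (edge_step s p) h = (1 - p) * h s + p * h (\<not> s)"
  using assms unfolding edge_step_def by simp

lemma pmf_eq_expectation_indicator:
  fixes M :: "'a::finite pmf"
  shows "pmf M x = measure_pmf.expectation M (\<lambda>y. of_bool (y = x))"
  by (simp add: expectation_pmf_finite)

lemma bool_set_cases:
  fixes X :: "bool set"
  obtains "X = {}" | "X = {s}" | "X = {\<not> s}" | "X = UNIV"
proof -
  have U: "{s, \<not> s} = UNIV"
    by auto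
  have "X \<in> Pow {s, \<not> s}"
    by (simp add: U)
  then have "X \<in> {{}, {s}, {\<not> s}, {s, \<not> s}}"
    by (simp add: Pow_insert insert_commute)
  with that show ?thesis
    unfolding U by blast
qed

lemma bool_sets_distinct [simp]:
  "{s} \<noteq> {\<not> s}" "{s} \<noteq> UNIV" "{\<not> s} \<noteq> UNIV" "UNIV \<noteq> {s}" "UNIV \<noteq> {\<not> s}"
  by auto

lemma expectation_nonempty_bool_sets:
  fixes D :: "bool set pmf"
  assumes "pmf D {} = 0"
  shows "measure_pmf.expectation D f =
    f {s} * pmf D {s} + f {\<not> s} * pmf D {\<not> s} + f UNIV * pmf D UNIV"
proof -
  have "X \<in> {{}, {s}, {\<not> s}, UNIV}" for X :: "bool set"
    by (cases X rule: bool_set_cases[where s = s]) auto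
  then have "{{}, {s}, {\<not> s}, UNIV} = (UNIV :: bool set set)"
    by blast
  then have "measure_pmf.expectation D f = (\<Sum>X\<in>{{}, {s}, {\<not> s}, UNIV}. f X * pmf D X)"
    by (simp only: expectation_pmf_finite)
  then show ?thesis
    using assms by simp
qed

lemma length_leaf_states: "xs \<in> set_pmf (leaf_states t s) \<Longrightarrow> length xs = nleaves t"
  by (induction t arbitrary: s xs) auto

lemma edge_step_Not: "edge_step (\<not> s) p = map_pmf Not (edge_step s p)"
  unfolding edge_step_def by (simp add: map_pmf_comp)

lemma leaf_states_Not: "leaf_states t (\<not> s) = map_pmf (map Not) (leaf_states t s)"
  by (induction t arbitrary: s) (simp_all add: edge_step_Not bind_map_pmf map_bind_pmf map_pmf_comp)

lemma inj_Not: "inj Not"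
  by (rule injI) simp

lemma fitch_combine_image:
  "inj f \<Longrightarrow> fitch_combine (f ` A) (f ` B) = f ` fitch_combine A B"
  by (simp add: fitch_combine_def image_Int[symmetric] image_Un)

lemma fitch_map_Not: "length xs = nleaves t \<Longrightarrow> fitch t (map Not xs) = Not ` fitch t xs"
proof (induction t arbitrary: xs)
  case Leaf
  then show ?case by (cases xs) auto
next
  case (Node p1 a p2 b)
  then show ?case
    by (simp add: take_map drop_map fitch_combine_image inj_Not)
qed

definition fitch_pmf :: "btree \<Rightarrow> bool \<Rightarrow> bool set pmf" where
  "fitch_pmf t s = map_pmf (fitch t) (leaf_states t s)"

definition stem_fitch_pmf :: "real \<Rightarrow> btree \<Rightarrow> bool \<Rightarrow> bool set pmf" where
  "stem_fitch_pmf p t s = bind_pmf (edge_step s p) (fitch_pmf t)"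

definition fitch_combine_pmf :: "bool set pmf \<Rightarrow> bool set pmf \<Rightarrow> bool set pmf" where
  "fitch_combine_pmf DA DB = bind_pmf DA (\<lambda>A. map_pmf (fitch_combine A) DB)"

lemma fitch_pmf_Not: "fitch_pmf t (\<not> s) = map_pmf (image Not) (fitch_pmf t s)"
  unfolding fitch_pmf_def leaf_states_Not map_pmf_comp
  by (rule map_pmf_cong) (auto simp: fitch_map_Not length_leaf_states)

lemma pmf_fitch_pmf_Not: "pmf (fitch_pmf t (\<not> s)) X = pmf (fitch_pmf t s) (Not ` X)"
proof -
  have "inj (image Not)"
    by (simp add: inj_image_eq_iff inj_Not inj_def)
  then have "pmf (map_pmf (image Not) (fitch_pmf t s)) (Not ` (Not ` X)) = pmf (fitch_pmf t s) (Not ` X)"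
    by (rule pmf_map_inj')
  then show ?thesis
    by (simp add: fitch_pmf_Not image_image)
qed

lemma fitch_pmf_Node:
  "fitch_pmf (Node p1 a p2 b) s = fitch_combine_pmf (stem_fitch_pmf p1 a s) (stem_fitch_pmf p2 b s)"
proof -
  have "fitch_pmf (Node p1 a p2 b) s = bind_pmf (edge_step s p1) (\<lambda>s1. bind_pmf (edge_step s p2)
      (\<lambda>s2. fitch_combine_pmf (fitch_pmf a s1) (fitch_pmf b s2)))"
    unfolding fitch_pmf_def fitch_combine_pmf_def
    by (simp add: map_bind_pmf bind_map_pmf map_pmf_comp)
      (intro bind_pmf_cong refl map_pmf_cong; simp add: length_leaf_states)
  then show ?thesis
    unfolding stem_fitch_pmf_def fitch_combine_pmf_def bind_assoc_pmf map_bind_pmf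
    by (subst bind_commute_pmf) simp
qed

lemma fitch_combine_simps:
  "fitch_combine {s} {s} = {s}" "fitch_combine {s} {\<not> s} = UNIV" "fitch_combine {s} UNIV = {s}"
  "fitch_combine {\<not> s} {s} = UNIV" "fitch_combine {\<not> s} {\<not> s} = {\<not> s}"
  "fitch_combine {\<not> s} UNIV = {\<not> s}"
  "fitch_combine UNIV {s} = {s}" "fitch_combine UNIV {\<not> s} = {\<not> s}" "fitch_combine UNIV UNIV = UNIV"
  by (cases s; auto simp: fitch_combine_def)+

lemma expectation_fitch_combine_pmf:
  fixes f :: "bool set \<Rightarrow> real"
  shows "measure_pmf.expectation (fitch_combine_pmf DA DB) f =
    measure_pmf.expectation DA (\<lambda>A. measure_pmf.expectation DB (\<lambda>B. f (fitch_combine A B)))"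
  unfolding fitch_combine_pmf_def by (simp add: expectation_bind_pmf_finite)

definition mp_recovery :: "bool \<Rightarrow> bool set \<Rightarrow> real" where
  "mp_recovery s X = (if s \<in> X then 1 / real (card X) else 0)"

lemma mp_recovery_simps [simp]:
  "mp_recovery s {s} = 1" "mp_recovery s {\<not> s} = 0" "mp_recovery s UNIV = 1/2"
  by (auto simp: mp_recovery_def)

lemma RA_MP_Root1:
  "RA_MP (Root1 p t) = (\<Sum>s\<in>UNIV. 1/2 * measure_pmf.expectation (stem_fitch_pmf p t s) (mp_recovery s))"
  unfolding RA_MP_def stem_fitch_pmf_def fitch_pmf_def mp_recovery_def
    pt_leaf_states.simps root_fitch.simps
  by (simp add: map_bind_pmf[symmetric])

lemma RA_MP_Root2:
  "RA_MP (Root2 p1 a p2 b) =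
    (\<Sum>s\<in>UNIV. 1/2 * measure_pmf.expectation (fitch_pmf (Node p1 a p2 b) s) (mp_recovery s))"
  unfolding RA_MP_def fitch_pmf_def mp_recovery_def pt_leaf_states.simps root_fitch.simps
  by simp

lemma pmf_nonempty_bool_sets_sum:
  fixes D :: "bool set pmf"
  assumes "pmf D {} = 0"
  shows "pmf D {s} + pmf D {\<not> s} + pmf D UNIV = 1"
  using expectation_nonempty_bool_sets[OF assms, of "\<lambda>_. 1" s] by simp

definition favours :: "bool set pmf \<Rightarrow> bool \<Rightarrow> bool" where
  "favours D s \<longleftrightarrow> pmf D {} = 0 \<and> pmf D {\<not> s} \<le> pmf D {s}"

lemma pmf_stem_fitch_pmf:
  assumes "0 \<le> p" "p \<le> 1"
  shows "pmf (stem_fitch_pmf p t s) X = (1 - p) * pmf (fitch_pmf t s) X + p * pmf (fitch_pmf t s) (Not ` X)"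
  using assms by (simp add: stem_fitch_pmf_def pmf_bind expectation_edge_step pmf_fitch_pmf_Not)

lemma favours_stem_fitch_pmf:
  assumes "favours (fitch_pmf t s) s" "0 \<le> p" "p \<le> 1/2"
  shows "favours (stem_fitch_pmf p t s) s"
proof -
  define u v where "u = pmf (fitch_pmf t s) {s}" and "v = pmf (fitch_pmf t s) {\<not> s}"
  have "Not ` {s} = {\<not> s}" "Not ` {\<not> s} = {s}" "Not ` {} = {}"
    by auto
  moreover have "(1 - p) * v + p * u \<le> (1 - p) * u + p * v"
  proof -
    have "0 \<le> (1 - 2 * p) * (u - v)"
      using assms by (simp add: favours_def u_def v_def)
    then show ?thesis
      by (simp add: algebra_simps)
  qed
  ultimately show ?thesis
    using assms by (simp add: favours_def pmf_stem_fitch_pmf u_def v_def)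
qed

lemma favours_fitch_combine_pmf:
  assumes "favours DA s" "favours DB s"
  shows "favours (fitch_combine_pmf DA DB) s"
proof -
  have "pmf DA {} = 0" "pmf DB {} = 0"
    using assms by (simp_all add: favours_def)
  then have "pmf (fitch_combine_pmf DA DB) {} = 0"
    and "pmf (fitch_combine_pmf DA DB) {s} =
      pmf DA {s} * pmf DB {s} + pmf DA {s} * pmf DB UNIV + pmf DA UNIV * pmf DB {s}"
    and "pmf (fitch_combine_pmf DA DB) {\<not> s} =
      pmf DA {\<not> s} * pmf DB {\<not> s} + pmf DA {\<not> s} * pmf DB UNIV + pmf DA UNIV * pmf DB {\<not> s}"
    by (simp_all add: pmf_eq_expectation_indicator[of "fitch_combine_pmf DA DB"]
        expectation_fitch_combine_pmf expectation_nonempty_bool_sets[where s = s] fitch_combine_simps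
        algebra_simps)
  moreover have "pmf DA {\<not> s} * pmf DB {\<not> s} + pmf DA {\<not> s} * pmf DB UNIV + pmf DA UNIV * pmf DB {\<not> s}
      \<le> pmf DA {s} * pmf DB {s} + pmf DA {s} * pmf DB UNIV + pmf DA UNIV * pmf DB {s}"
    using assms by (intro add_mono mult_mono) (simp_all add: favours_def)
  ultimately show ?thesis
    by (simp add: favours_def)
qed

lemma favours_fitch_pmf: "valid_bt t \<Longrightarrow> favours (fitch_pmf t s) s"
proof (induction t arbitrary: s)
  case Leaf
  then show ?case
    by (simp add: favours_def fitch_pmf_def pmf_return)
next
  case (Node p1 a p2 b)
  then show ?case
    by (simp add: fitch_pmf_Node favours_fitch_combine_pmf favours_stem_fitch_pmf)
qed

lemma expectation_mp_recovery_fitch_combine_pmf: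
  assumes "favours DA s" "favours DB s"
  shows "(measure_pmf.expectation DA (mp_recovery s) + measure_pmf.expectation DB (mp_recovery s)) / 2
    \<le> measure_pmf.expectation (fitch_combine_pmf DA DB) (mp_recovery s)"
proof -
  define aA bA cA where "aA = pmf DA {s}" and "bA = pmf DA {\<not> s}" and "cA = pmf DA UNIV"
  define aB bB cB where "aB = pmf DB {s}" and "bB = pmf DB {\<not> s}" and "cB = pmf DB UNIV"
  have nonempty: "pmf DA {} = 0" "pmf DB {} = 0"
    using assms by (simp_all add: favours_def)
  have mass: "aA = 1 - bA - cA" "aB = 1 - bB - cB"
    using pmf_nonempty_bool_sets_sum[OF nonempty(1), of s] pmf_nonempty_bool_sets_sum[OF nonempty(2), of s]
    by (simp_all add: aA_def bA_def cA_def aB_def bB_def cB_def)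
  have "(measure_pmf.expectation DA (mp_recovery s) + measure_pmf.expectation DB (mp_recovery s)) / 2
      = ((aA + cA / 2) + (aB + cB / 2)) / 2"
    using nonempty by (simp add: expectation_nonempty_bool_sets[where s = s] aA_def cA_def aB_def cB_def)
  also have "\<dots> \<le> ((aA + cA / 2) + (aB + cB / 2)) / 2 + ((aA - bA) * cB + cA * (aB - bB)) / 4"
    using assms by (simp add: favours_def aA_def bA_def cA_def aB_def bB_def cB_def)
  also have "\<dots> = aA * aB + aA * bB / 2 + aA * cB + bA * aB / 2 + cA * aB + cA * cB / 2"
    unfolding mass by (simp add: field_simps)
  also have "\<dots> = measure_pmf.expectation (fitch_combine_pmf DA DB) (mp_recovery s)"
    using nonempty
    by (simp add: expectation_fitch_combine_pmf expectation_nonempty_bool_sets[where s = s]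
        fitch_combine_simps aA_def bA_def cA_def aB_def bB_def cB_def algebra_simps)
  finally show ?thesis .
qed

theorem mainTheorem14:
  fixes p1 p2 :: real and T1 T2 :: btree
  assumes "valid_pt (Root2 p1 T1 p2 T2)"
  shows "RA_MP (Root2 p1 T1 p2 T2) \<ge> (RA_MP (Root1 p1 T1) + RA_MP (Root1 p2 T2)) / 2"
proof -
  have "favours (stem_fitch_pmf p1 T1 s) s" "favours (stem_fitch_pmf p2 T2 s) s" for s
    using assms by (simp_all add: favours_stem_fitch_pmf favours_fitch_pmf)
  then have "(measure_pmf.expectation (stem_fitch_pmf p1 T1 s) (mp_recovery s)
      + measure_pmf.expectation (stem_fitch_pmf p2 T2 s) (mp_recovery s)) / 2
    \<le> measure_pmf.expectation (fitch_pmf (Node p1 T1 p2 T2) s) (mp_recovery s)" for s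
    unfolding fitch_pmf_Node by (rule expectation_mp_recovery_fitch_combine_pmf)
  from this[of True] this[of False] show ?thesis
    unfolding RA_MP_Root1 RA_MP_Root2 UNIV_bool by simp
qed

end
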